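(* Let $p>2$ be an even integer such that $p/2$ is odd. Then there exists a subset $\mathcal{X}$ of $\mathbb{P}^2_\circ$ with $|\mathcal{X}|=|B(2,p)\cap\mathbb{P}^2_\circ|-1$ and $$\kappa(\mathcal{X})\le\kappa(B(2,p)\cap\mathbb{P}^2_\circ)-\frac{p}{2}+1.$$ Moreover, every subset $\mathcal{X}$ of $\mathbb{P}^2_\circ$ with these two properties satisfies at least one of: (i) some point of $B(2,p-1)\cap\mathbb{P}^2_\circ$ is not in $\mathcal{X}$; (ii) some point of $\mathcal{X}$ is not in $B(2,p)\cap\mathbb{P}^2_\circ$.
   Context: A point of $\mathbb{Z}^2$ is primitive if its coordinates are relatively prime; $\mathbb{P}^2_\circ$ denotes the set of primitive points of $\mathbb{Z}^2$ whose first non-zero coordinate is positive. $B(2,p)=\{x\in\mathbb{R}^2:\|x\|_1\le p\}$. For a finite $\mathcal{X}\subset\mathbb{R}^2$, $\kappa(\mathcal{X})=\max_{i\in\{1,2\}}\sum_{x\in\mathcal{X}}|x_i|$. *)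

theory Defs
  imports Main
begin

definition primitive :: "int \<times> int \<Rightarrow> bool" where
  "primitive x \<longleftrightarrow> gcd (fst x) (snd x) = 1"

definition Pcirc :: "(int \<times> int) set" where
  "Pcirc = {x. primitive x \<and> (fst x > 0 \<or> (fst x = 0 \<and> snd x > 0))}"

definition Bl1 :: "int \<Rightarrow> (int \<times> int) set" where
  "Bl1 p = {x. \<bar>fst x\<bar> + \<bar>snd x\<bar> \<le> p}"

definition kappa :: "(int \<times> int) set \<Rightarrow> int" where
  "kappa X = max (\<Sum>x\<in>X. \<bar>fst x\<bar>) (\<Sum>x\<in>X. \<bar>snd x\<bar>)"

end

theory Submission
  imports Defs
begin

text \<open>
  Write \<open>p = 2m\<close> and \<open>S = B(2,p) \<inter> P\<close>. Exchanging the coordinates and renormalising the sign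
  permutes \<open>S\<close>, so both coordinate sums of \<open>S\<close> equal \<open>\<kappa>(S)\<close>.
  Replacing \<open>(1, p-1)\<close> and \<open>(p-1, 1)\<close> by the primitive point \<open>(m, m+1)\<close> lowers the first
  coordinate sum by \<open>m\<close> and the second by \<open>m-1\<close>.
  Conversely, a set \<open>X\<close> with \<open>B(2,p-1) \<inter> P \<subseteq> X \<subseteq> S\<close> and one point fewer than \<open>S\<close> is \<open>S\<close>
  minus a point \<open>(a,b)\<close> with \<open>|a| + |b| = p\<close>, so \<open>\<kappa>(X) = \<kappa>(S) - min |a| |b|\<close>. For odd
  \<open>m > 1\<close>, the points with \<open>{|a|, |b|} = {m}\<close> or \<open>{m-1, m+1}\<close> are not primitive, hence
  \<open>min |a| |b| \<le> m - 2\<close>.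
\<close>

lemma finite_Bl1: "finite (Bl1 p)"
proof -
  have "Bl1 p \<subseteq> {-p..p} \<times> {-p..p}" by (auto simp: Bl1_def)
  then show ?thesis by (rule finite_subset) simp
qed

definition Pcirc_rep :: "int \<times> int \<Rightarrow> int \<times> int" where
  "Pcirc_rep v = (if fst v > 0 \<or> (fst v = 0 \<and> snd v > 0) then v else (- fst v, - snd v))"

definition swap_rep :: "int \<times> int \<Rightarrow> int \<times> int" where
  "swap_rep v = Pcirc_rep (snd v, fst v)"

lemma swap_rep_in_Bl1: "v \<in> Bl1 p \<Longrightarrow> swap_rep v \<in> Bl1 p"
  by (auto simp: swap_rep_def Pcirc_rep_def Bl1_def)

lemma swap_rep_in_Pcirc: "v \<in> Pcirc \<Longrightarrow> swap_rep v \<in> Pcirc"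
  by (cases v) (auto simp: swap_rep_def Pcirc_rep_def Pcirc_def primitive_def gcd.commute)

lemma swap_rep_swap_rep: "v \<in> Pcirc \<Longrightarrow> swap_rep (swap_rep v) = v"
  by (cases v) (auto simp: swap_rep_def Pcirc_rep_def Pcirc_def)

lemma abs_snd_swap_rep: "\<bar>snd (swap_rep v)\<bar> = \<bar>fst v\<bar>"
  by (auto simp: swap_rep_def Pcirc_rep_def)

lemma sum_abs_fst_Bl1_Pcirc: "(\<Sum>x\<in>Bl1 p \<inter> Pcirc. \<bar>fst x\<bar>) = (\<Sum>x\<in>Bl1 p \<inter> Pcirc. \<bar>snd x\<bar>)"
  by (rule sum.reindex_bij_witness[where i = swap_rep and j = swap_rep])
    (simp_all add: swap_rep_swap_rep abs_snd_swap_rep swap_rep_in_Bl1 swap_rep_in_Pcirc)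

lemma kappa_Bl1_Pcirc: "kappa (Bl1 p \<inter> Pcirc) = (\<Sum>x\<in>Bl1 p \<inter> Pcirc. \<bar>fst x\<bar>)"
  by (simp add: kappa_def sum_abs_fst_Bl1_Pcirc)

lemma
  assumes "finite S" and "u \<in> S" and "v \<in> S" and "u \<noteq> v" and "w \<notin> S"
  shows sum_insert_Diff_pair:
      "sum f (insert w (S - {u, v})) = sum f S - f u - f v + (f w :: 'b :: ab_group_add)"
    and card_insert_Diff_pair: "card (insert w (S - {u, v})) = card S - 1"
proof -
  have uv: "{u, v} \<subseteq> S" using assms by simp
  have "sum f (insert w (S - {u, v})) = f w + (sum f S - sum f {u, v})"
    using assms by (simp add: sum_diff[OF _ uv])
  then show "sum f (insert w (S - {u, v})) = sum f S - f u - f v + f w"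
    using assms(4) by (simp add: algebra_simps)
  have "card S \<ge> 2" using card_mono[OF assms(1) uv] assms(4) by simp
  then show "card (insert w (S - {u, v})) = card S - 1"
    using assms by (simp add: card_Diff_subset[OF _ uv])
qed

lemma exists_exchange_Bl1_Pcirc:
  fixes m :: int
  assumes "m \<ge> 2"
  defines "S \<equiv> Bl1 (2 * m) \<inter> Pcirc"
  shows "\<exists>X \<subseteq> Pcirc. finite X \<and> card X = card S - 1 \<and> kappa X \<le> kappa S - m + 1"
proof -
  define u v w :: "int \<times> int" where "u = (1, 2 * m - 1)" and "v = (2 * m - 1, 1)" and "w = (m, m + 1)"
  define X where "X = insert w (S - {u, v})"
  have "gcd m (m + 1) = 1"
    by (metis gcd_add2 gcd_1_int)
  then have w: "w \<in> Pcirc" "w \<notin> S"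
    using assms by (auto simp: w_def S_def Bl1_def Pcirc_def primitive_def)
  have uv: "u \<in> S" "v \<in> S" "u \<noteq> v"
    using assms by (auto simp: u_def v_def S_def Bl1_def Pcirc_def primitive_def)
  have fin: "finite S" by (simp add: S_def finite_Bl1)
  have "X \<subseteq> Pcirc" "finite X" using w fin by (auto simp: X_def S_def)
  moreover have "card X = card S - 1"
    unfolding X_def using fin uv w(2) by (rule card_insert_Diff_pair)
  moreover have sum_X: "sum f X = sum f S - f u - f v + f w" for f :: "int \<times> int \<Rightarrow> int"
    unfolding X_def using fin uv w(2) by (rule sum_insert_Diff_pair)
  moreover have "kappa X \<le> kappa S - m + 1"
    using sum_X[of "\<lambda>x. \<bar>fst x\<bar>"] sum_X[of "\<lambda>x. \<bar>snd x\<bar>"] assms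
    unfolding kappa_def S_def sum_abs_fst_Bl1_Pcirc by (simp add: u_def v_def w_def)
  ultimately show ?thesis by blast
qed

lemma min_abs_le_if_coprime:
  fixes a b m :: int
  assumes "odd m" and "m > 1" and "\<bar>a\<bar> + \<bar>b\<bar> = 2 * m" and "gcd a b = 1"
  shows "min \<bar>a\<bar> \<bar>b\<bar> \<le> m - 2"
proof (rule ccontr)
  assume "\<not> ?thesis"
  then consider "\<bar>a\<bar> = m" "\<bar>b\<bar> = m" | "even \<bar>a\<bar>" "even \<bar>b\<bar>"
    using assms(1,3) by (smt (verit) even_add odd_one)
  then show False
  proof cases
    case 1
    then have "m dvd gcd a b" by (metis dvd_abs_iff dvd_refl gcd_greatest)
    then show False using assms(2,4) by simp
  next
    case 2
    then have "2 dvd gcd a b" by simp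
    then show False using assms(4) by simp
  qed
qed

lemma eq_Diff_singleton_if_card_eq:
  assumes "finite S" and "X \<subseteq> S" and "S \<noteq> {}" and "card X = card S - 1"
  obtains z where "z \<in> S" and "X = S - {z}"
proof -
  have "card (S - X) = 1"
    using assms by (simp add: card_Diff_subset finite_subset card_gt_0_iff Suc_leI)
  then obtain z where "S - X = {z}" by (rule card_1_singletonE)
  then show thesis using assms(2) that by blast
qed

lemma kappa_ge_if_sphere_point_removed:
  fixes m :: int
  assumes "odd m" and "m > 1"
    and "Bl1 (2 * m - 1) \<inter> Pcirc \<subseteq> X" and "X \<subseteq> Bl1 (2 * m) \<inter> Pcirc"
    and "card X = card (Bl1 (2 * m) \<inter> Pcirc) - 1"
  shows "kappa X \<ge> kappa (Bl1 (2 * m) \<inter> Pcirc) - m + 2"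
proof -
  let ?S = "Bl1 (2 * m) \<inter> Pcirc"
  have fin: "finite ?S" by (simp add: finite_Bl1)
  have "(1, 0) \<in> ?S" using assms(2) by (auto simp: Bl1_def Pcirc_def primitive_def)
  then obtain z where z: "z \<in> ?S" and X: "X = ?S - {z}"
    using eq_Diff_singleton_if_card_eq[OF fin assms(4) _ assms(5)] by blast
  obtain a b where ab: "z = (a, b)" by fastforce
  have "z \<notin> Bl1 (2 * m - 1)" using z X assms(3) by blast
  then have "\<bar>a\<bar> + \<bar>b\<bar> = 2 * m" and "gcd a b = 1"
    using z by (auto simp: ab Bl1_def Pcirc_def primitive_def)
  then have small: "min \<bar>a\<bar> \<bar>b\<bar> \<le> m - 2"
    by (rule min_abs_le_if_coprime[OF assms(1,2)])
  have "(\<Sum>x\<in>X. \<bar>fst x\<bar>) = kappa ?S - \<bar>a\<bar>" "(\<Sum>x\<in>X. \<bar>snd x\<bar>) = kappa ?S - \<bar>b\<bar>"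
    using sum.remove[OF fin z, of "\<lambda>x. \<bar>fst x\<bar>"] sum.remove[OF fin z, of "\<lambda>x. \<bar>snd x\<bar>"]
    by (simp_all add: X ab kappa_Bl1_Pcirc sum_abs_fst_Bl1_Pcirc)
  then show ?thesis
    using small unfolding kappa_def[of X] le_max_iff_disj min_le_iff_disj by auto
qed

theorem proposition5p3:
  fixes p :: int
  assumes "p > 2" and "even p" and "odd (p div 2)"
  shows "(\<exists>X. X \<subseteq> Pcirc \<and> finite X \<and>
            card X = card (Bl1 p \<inter> Pcirc) - 1 \<and>
            kappa X \<le> kappa (Bl1 p \<inter> Pcirc) - p div 2 + 1)
       \<and> (\<forall>X. X \<subseteq> Pcirc \<and> finite X \<and>
            card X = card (Bl1 p \<inter> Pcirc) - 1 \<and>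
            kappa X \<le> kappa (Bl1 p \<inter> Pcirc) - p div 2 + 1
          \<longrightarrow> (\<exists>x\<in>Bl1 (p - 1) \<inter> Pcirc. x \<notin> X) \<or> (\<exists>x\<in>X. x \<notin> Bl1 p \<inter> Pcirc))"
proof -
  define m where "m = p div 2"
  have p: "p = 2 * m" using assms(2) by (simp add: m_def)
  have m: "odd m" "m > 1" using assms(1,3) by (simp_all add: m_def[symmetric] p)
  have exchange: "\<exists>X \<subseteq> Pcirc. finite X \<and> card X = card (Bl1 p \<inter> Pcirc) - 1
      \<and> kappa X \<le> kappa (Bl1 p \<inter> Pcirc) - p div 2 + 1"
    using exists_exchange_Bl1_Pcirc[of m] m by (simp add: p)
  have lower: "kappa X \<ge> kappa (Bl1 p \<inter> Pcirc) - p div 2 + 2"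
    if "Bl1 (p - 1) \<inter> Pcirc \<subseteq> X" and "X \<subseteq> Bl1 p \<inter> Pcirc"
      and "card X = card (Bl1 p \<inter> Pcirc) - 1" for X
    using kappa_ge_if_sphere_point_removed[OF m] that by (simp add: p)
  show ?thesis
  proof (intro conjI allI impI)
    fix X
    assume X: "X \<subseteq> Pcirc \<and> finite X \<and> card X = card (Bl1 p \<inter> Pcirc) - 1
      \<and> kappa X \<le> kappa (Bl1 p \<inter> Pcirc) - p div 2 + 1"
    show "(\<exists>x\<in>Bl1 (p - 1) \<inter> Pcirc. x \<notin> X) \<or> (\<exists>x\<in>X. x \<notin> Bl1 p \<inter> Pcirc)"
    proof (rule ccontr)
      assume "\<not> ?thesis"
      then have "Bl1 (p - 1) \<inter> Pcirc \<subseteq> X" and "X \<subseteq> Bl1 p \<inter> Pcirc" by blast+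
      then show False using lower[of X] X by linarith
    qed
  qed (use exchange in blast)
qed

end
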